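(* Let $(X,d)$ be a metric space, $f:X\to X$ a Borel measurable map and $\mu$ a Borel probability measure on $X$. Then $\mu$ is an expansive measure of $f$ (i.e., there is $\delta>0$ with $\mu(\Phi_\delta(x))=0$ for all $x\in X$) if and only if there is $\delta>0$ such that $\mu(\Phi_\delta(x))=0$ for $\mu$-almost every $x\in X$.
   Context: Here $\Phi_\delta(x)=\{y\in X: d(f^i(y),f^i(x))\le\delta \text{ for all } i\in\mathbb{N}\}$, $\mathbb{N}=\{0,1,2,\dots\}$. *)

theory Defs
  imports "HOL-Probability.Probability"
begin

definition dyn_ball :: "('a::metric_space \<Rightarrow> 'a) \<Rightarrow> real \<Rightarrow> 'a \<Rightarrow> 'a set" where
  "dyn_ball f \<delta> x = {y. \<forall>i::nat. dist ((f ^^ i) y) ((f ^^ i) x) \<le> \<delta>}"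

definition expansive_measure :: "('a::metric_space \<Rightarrow> 'a) \<Rightarrow> 'a measure \<Rightarrow> bool" where
  "expansive_measure f M \<longleftrightarrow> (\<exists>\<delta>>0. \<forall>x. emeasure M (dyn_ball f \<delta> x) = 0)"

end

theory Submission
  imports Defs
begin

text \<open>If \<open>\<mu>(\<Phi>_\<delta>(x)) = 0\<close> for almost every \<open>x\<close>, then every \<open>\<Phi>_{\<delta>/2}(x)\<close> is null:
  either it contains a point \<open>y\<close> outside the exceptional null set, and then
  \<open>\<Phi>_{\<delta>/2}(x) \<subseteq> \<Phi>_\<delta>(y)\<close> by the triangle inequality, or it is contained in that null set.\<close>

lemma sets_dyn_ball:
  fixes f :: "'a::metric_space \<Rightarrow> 'a"
  assumes "f \<in> borel_measurable borel"
  shows "dyn_ball f \<delta> x \<in> sets borel"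
proof -
  have "dyn_ball f \<delta> x = (\<Inter>i. (f ^^ i) -` cball ((f ^^ i) x) \<delta>)"
    by (auto simp: dyn_ball_def dist_commute)
  moreover have "(f ^^ i) -` cball ((f ^^ i) x) \<delta> \<in> sets borel" for i
    using measurable_sets[OF measurable_compose_n[OF assms], of "cball ((f ^^ i) x) \<delta>" i]
    by simp
  ultimately show ?thesis by auto
qed

lemma dyn_ball_subset_dyn_ball:
  assumes "y \<in> dyn_ball f \<delta> x"
  shows "dyn_ball f \<epsilon> x \<subseteq> dyn_ball f (\<epsilon> + \<delta>) y"
proof
  fix z assume z: "z \<in> dyn_ball f \<epsilon> x"
  have "dist ((f ^^ i) z) ((f ^^ i) y) \<le> \<epsilon> + \<delta>" for i
  proof -
    have "dist ((f ^^ i) z) ((f ^^ i) x) \<le> \<epsilon>" "dist ((f ^^ i) y) ((f ^^ i) x) \<le> \<delta>"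
      using z assms by (auto simp: dyn_ball_def)
    then show ?thesis
      using dist_triangle2[of "(f ^^ i) z" "(f ^^ i) y" "(f ^^ i) x"] by linarith
  qed
  then show "z \<in> dyn_ball f (\<epsilon> + \<delta>) y"
    by (simp add: dyn_ball_def)
qed

lemma emeasure_eq_0_if_AE_witness:
  assumes "AE y in M. P y" and "A \<subseteq> space M"
    and "\<And>y. y \<in> A \<Longrightarrow> P y \<Longrightarrow> emeasure M A = 0"
  shows "emeasure M A = 0"
proof (cases "\<exists>y\<in>A. P y")
  case False
  then have "AE y in M. y \<notin> A"
    using assms(1) False by (auto elim!: eventually_mono)
  then have "emeasure M {y \<in> space M. y \<in> A} = 0"
    by (rule emeasure_eq_0_AE)
  moreover have "{y \<in> space M. y \<in> A} = A"
    using assms(2) by auto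
  ultimately show ?thesis by simp
qed (use assms(3) in blast)

theorem lemma2p3:
  fixes f :: "'a::metric_space \<Rightarrow> 'a" and M :: "'a measure"
  assumes "f \<in> borel_measurable borel"
    and "sets M = sets borel"
    and "prob_space M"
  shows "expansive_measure f M \<longleftrightarrow>
         (\<exists>\<delta>>0. AE x in M. emeasure M (dyn_ball f \<delta> x) = 0)"
proof
  assume "\<exists>\<delta>>0. AE x in M. emeasure M (dyn_ball f \<delta> x) = 0"
  then obtain \<delta> where "\<delta> > 0" and null_ae: "AE y in M. emeasure M (dyn_ball f \<delta> y) = 0"
    by auto
  have space: "space M = UNIV"
    using sets_eq_imp_space_eq[OF assms(2)] by simp
  have "emeasure M (dyn_ball f (\<delta>/2) x) = 0" for x
  proof (rule emeasure_eq_0_if_AE_witness[OF null_ae])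
    fix y
    assume "y \<in> dyn_ball f (\<delta>/2) x" and null: "emeasure M (dyn_ball f \<delta> y) = 0"
    then have "dyn_ball f (\<delta>/2) x \<subseteq> dyn_ball f \<delta> y"
      using dyn_ball_subset_dyn_ball[of y f "\<delta>/2" x "\<delta>/2"] by simp
    moreover have "dyn_ball f \<delta> y \<in> sets M"
      using sets_dyn_ball[OF assms(1)] assms(2) by simp
    ultimately show "emeasure M (dyn_ball f (\<delta>/2) x) = 0"
      using emeasure_mono null by (metis le_zero_eq)
  qed (simp add: space)
  with \<open>\<delta> > 0\<close> show "expansive_measure f M"
    unfolding expansive_measure_def by (intro exI[of _ "\<delta>/2"]) auto
qed (auto simp: expansive_measure_def)

end
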